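(* Let $\mathcal{A}\subseteq\mathbb{R}^3$, $K\ge2$, $P_1,\ldots,P_K>0$, $\sigma^2>0$, and $h_1,\ldots,h_K\in L^2(\mathcal{A})$ with positive definite Gram matrix $\mathbf{R}$, $r_{k_1,k_2}=[\mathbf{R}]_{k_1,k_2}=\int_{\mathcal{A}}h_{k_1}^{*}h_{k_2}\,\mathrm{d}\mathbf{r}$. For a nonzero $w_k\in L^2(\mathcal{A})$ define the SINR $$\gamma_k(w_k)=\frac{\frac{P_k}{\sigma^2}\left|\int_{\mathcal{A}}w_k^{*}h_k\,\mathrm{d}\mathbf{r}\right|^2}{\sum_{k'\neq k}\frac{P_{k'}}{\sigma^2}\left|\int_{\mathcal{A}}w_k^{*}h_{k'}\,\mathrm{d}\mathbf{r}\right|^2+\int_{\mathcal{A}}|w_k|^2\,\mathrm{d}\mathbf{r}}$$ and the rate $\mathcal{R}_k=\log_2(1+\gamma_k)$. Fix $k$, let $\mathbf{h}_{\setminus k}(\mathbf{r})=[h_{k'}(\mathbf{r})]_{k'\neq k}\in\mathbb{C}^{1\times(K-1)}$, $\mathbf{R}_k$ the matrix $\mathbf{R}$ with row and column $k$ removed, $\mathbf{r}_{k,k}=[r_{k',k}]_{k'\neq k}\in\mathbb{C}^{(K-1)\times1}$, $\mathbf{P}_k=\mathrm{diag}(P_{k'}/\sigma^2)_{k'\neq k}$, $\mathbf{C}_k=\mathbf{P}_k^{1/2}\mathbf{R}_k\mathbf{P}_k^{1/2}$, and $\overline{\mathbf{C}}_k=(\mathbf{I}_{K-1}+\mathbf{C}_k)^{-1}$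 with entries $\overline{c}_{k_1,k_2}$ ($k_1,k_2\neq k$). Then the beamformer $$w_{\mathsf{MMSE},k}(\mathbf{r})=h_k(\mathbf{r})-\sum_{k_1\neq k}\sum_{k_2\neq k}\overline{c}_{k_1,k_2}\frac{\sqrt{P_{k_1}P_{k_2}}}{\sigma^2}h_{k_1}(\mathbf{r})r_{k_2,k}=h_k(\mathbf{r})-\mathbf{h}_{\setminus k}(\mathbf{r})(\mathbf{P}_k^{-1}+\mathbf{R}_k)^{-1}\mathbf{r}_{k,k}$$ maximizes $\gamma_k(w_k)$ (equivalently the per-user rate $\mathcal{R}_k$) over all nonzero $w_k\in L^2(\mathcal{A})$.
   Context: Standing assumption: channel responses pairwise non-parallel and $\mathbf{R}$ positive definite. *)

theory Defs
  imports "HOL-Analysis.Analysis"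
begin

definition L2 :: "(real^3) set \<Rightarrow> (real^3 \<Rightarrow> complex) \<Rightarrow> bool" where
  "L2 A f \<longleftrightarrow> f \<in> borel_measurable (lebesgue_on A) \<and>
                integrable (lebesgue_on A) (\<lambda>r. (cmod (f r))\<^sup>2)"

definition ip :: "(real^3) set \<Rightarrow> (real^3 \<Rightarrow> complex) \<Rightarrow> (real^3 \<Rightarrow> complex) \<Rightarrow> complex" where
  "ip A f g = integral\<^sup>L (lebesgue_on A) (\<lambda>r. cnj (f r) * g r)"

text \<open>Gram matrix entries r_{k1,k2} = int_A cnj(h_k1) h_k2 dr (users indexed 0..<K).\<close>

definition gram :: "(real^3) set \<Rightarrow> (nat \<Rightarrow> real^3 \<Rightarrow> complex) \<Rightarrow> nat \<Rightarrow> nat \<Rightarrow> complex" where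
  "gram A h k1 k2 = ip A (h k1) (h k2)"

definition pos_def_mat :: "nat \<Rightarrow> (nat \<Rightarrow> nat \<Rightarrow> complex) \<Rightarrow> bool" where
  "pos_def_mat K M \<longleftrightarrow> (\<forall>i<K. \<forall>j<K. M j i = cnj (M i j)) \<and>
     (\<forall>x :: nat \<Rightarrow> complex. (\<exists>i<K. x i \<noteq> 0) \<longrightarrow>
        (\<Sum>i<K. \<Sum>j<K. cnj (x i) * M i j * x j) \<in> \<real> \<and>
        Re (\<Sum>i<K. \<Sum>j<K. cnj (x i) * M i j * x j) > 0)"

definition mat_inv_on :: "nat set \<Rightarrow> (nat \<Rightarrow> nat \<Rightarrow> complex) \<Rightarrow> (nat \<Rightarrow> nat \<Rightarrow> complex)" where
  "mat_inv_on S M = (THE B. (\<forall>i\<in>S. \<forall>l\<in>S. (\<Sum>j\<in>S. M i j * B j l) = (if i = l then 1 else 0))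
                        \<and> (\<forall>i l. i \<notin> S \<or> l \<notin> S \<longrightarrow> B i l = 0))"

definition sinr :: "(real^3) set \<Rightarrow> nat \<Rightarrow> (nat \<Rightarrow> real) \<Rightarrow> real \<Rightarrow> (nat \<Rightarrow> real^3 \<Rightarrow> complex)
                     \<Rightarrow> nat \<Rightarrow> (real^3 \<Rightarrow> complex) \<Rightarrow> real" where
  "sinr A K P \<sigma>2 h k w =
     (P k / \<sigma>2) * (cmod (ip A w (h k)))\<^sup>2 /
     ((\<Sum>k'\<in>{0..<K} - {k}. (P k' / \<sigma>2) * (cmod (ip A w (h k')))\<^sup>2)
       + integral\<^sup>L (lebesgue_on A) (\<lambda>r. (cmod (w r))\<^sup>2))"

definition rate :: "(real^3) set \<Rightarrow> nat \<Rightarrow> (nat \<Rightarrow> real) \<Rightarrow> real \<Rightarrow> (nat \<Rightarrow> real^3 \<Rightarrow> complex)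
                     \<Rightarrow> nat \<Rightarrow> (real^3 \<Rightarrow> complex) \<Rightarrow> real" where
  "rate A K P \<sigma>2 h k w = log 2 (1 + sinr A K P \<sigma>2 h k w)"

definition C_mat :: "(real^3) set \<Rightarrow> nat \<Rightarrow> (nat \<Rightarrow> real) \<Rightarrow> real \<Rightarrow> (nat \<Rightarrow> real^3 \<Rightarrow> complex)
                     \<Rightarrow> nat \<Rightarrow> nat \<Rightarrow> nat \<Rightarrow> complex" where
  "C_mat A K P \<sigma>2 h k k1 k2 =
     complex_of_real (sqrt (P k1 / \<sigma>2)) * gram A h k1 k2 * complex_of_real (sqrt (P k2 / \<sigma>2))"

definition Cbar_mat :: "(real^3) set \<Rightarrow> nat \<Rightarrow> (nat \<Rightarrow> real) \<Rightarrow> real \<Rightarrow> (nat \<Rightarrow> real^3 \<Rightarrow> complex)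
                     \<Rightarrow> nat \<Rightarrow> nat \<Rightarrow> nat \<Rightarrow> complex" where
  "Cbar_mat A K P \<sigma>2 h k = mat_inv_on ({0..<K} - {k})
     (\<lambda>i j. (if i = j then 1 else 0) + C_mat A K P \<sigma>2 h k i j)"

definition w_mmse :: "(real^3) set \<Rightarrow> nat \<Rightarrow> (nat \<Rightarrow> real) \<Rightarrow> real \<Rightarrow> (nat \<Rightarrow> real^3 \<Rightarrow> complex)
                     \<Rightarrow> nat \<Rightarrow> real^3 \<Rightarrow> complex" where
  "w_mmse A K P \<sigma>2 h k r =
     h k r - (\<Sum>k1\<in>{0..<K} - {k}. \<Sum>k2\<in>{0..<K} - {k}.
        Cbar_mat A K P \<sigma>2 h k k1 k2 * complex_of_real (sqrt (P k1 * P k2) / \<sigma>2)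
          * h k1 r * gram A h k2 k)"

end

theory Submission
  imports Defs "Jordan_Normal_Form.Determinant"
begin

text \<open>Write \<open>p\<^sub>i = P\<^sub>i/\<sigma>\<^sup>2\<close>, \<open>\<langle>f, g\<rangle> = \<integral>\<^sub>A cnj f g\<close> and \<open>u\<close> for the MMSE beamformer.
  Its weights solve the regularised normal equations \<open>(P\<^sub>k\<^sup>-\<^sup>1 + R\<^sub>k) \<beta> = r\<^sub>k\<^sub>,\<^sub>k\<close>, which say exactly
  that \<open>h\<^sub>k = u + \<Sum>\<^sub>i\<^sub>\<noteq>\<^sub>k p\<^sub>i \<langle>h\<^sub>i, u\<rangle> h\<^sub>i\<close>. Pairing with any \<open>w\<close> gives
  \<open>\<langle>w, h\<^sub>k\<rangle> = \<langle>w, u\<rangle> + \<Sum>\<^sub>i p\<^sub>i \<langle>h\<^sub>i, u\<rangle> \<langle>w, h\<^sub>i\<rangle>\<close>, and Cauchy--Schwarz in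
  \<open>L\<^sup>2(A) \<oplus> \<ell>\<^sup>2(p)\<close> bounds \<open>|\<langle>w, h\<^sub>k\<rangle>|\<^sup>2\<close> by the SINR denominator of \<open>w\<close> times
  \<open>Y = \<parallel>u\<parallel>\<^sup>2 + \<Sum>\<^sub>i p\<^sub>i |\<langle>h\<^sub>i, u\<rangle>|\<^sup>2\<close>. Hence every SINR is at most \<open>p\<^sub>k Y\<close>, and \<open>u\<close> attains it
  because \<open>\<langle>u, h\<^sub>k\<rangle> = Y\<close>. Positive definiteness of \<open>R\<close> makes \<open>I + C\<^sub>k\<close> invertible and \<open>u\<close> nonzero.\<close>

section \<open>Square-integrable functions\<close>

lemma borel_measurable_cnj [measurable]:
  "f \<in> borel_measurable M \<Longrightarrow> (\<lambda>x. cnj (f x)) \<in> borel_measurable M"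
  by (rule borel_measurable_continuous_on[where f=cnj]) (auto intro: continuous_intros)

abbreviation sqnorm :: "(real^3) set \<Rightarrow> (real^3 \<Rightarrow> complex) \<Rightarrow> real" where
  "sqnorm A f \<equiv> integral\<^sup>L (lebesgue_on A) (\<lambda>r. (cmod (f r))\<^sup>2)"

lemma sqnorm_nonneg: "0 \<le> sqnorm A f"
  by (rule Bochner_Integration.integral_nonneg) simp

lemma L2_add:
  assumes "L2 A f" "L2 A g"
  shows "L2 A (\<lambda>r. f r + g r)"
proof -
  have "f \<in> borel_measurable (lebesgue_on A)" "g \<in> borel_measurable (lebesgue_on A)"
    using assms by (simp_all add: L2_def)
  then have meas: "(\<lambda>r. f r + g r) \<in> borel_measurable (lebesgue_on A)"
    by measurable
  have bound: "(cmod (f r + g r))\<^sup>2 \<le> 2 * (cmod (f r))\<^sup>2 + 2 * (cmod (g r))\<^sup>2" for r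
  proof -
    have "(cmod (f r + g r))\<^sup>2 \<le> (cmod (f r) + cmod (g r))\<^sup>2"
      by (simp add: norm_triangle_ineq power_mono)
    also have "\<dots> \<le> 2 * (cmod (f r))\<^sup>2 + 2 * (cmod (g r))\<^sup>2"
      using zero_le_power2[of "cmod (f r) - cmod (g r)"] unfolding power2_diff power2_sum by linarith
    finally show ?thesis .
  qed
  have "integrable (lebesgue_on A) (\<lambda>r. (cmod (f r + g r))\<^sup>2)"
  proof (rule Bochner_Integration.integrable_bound)
    show "integrable (lebesgue_on A) (\<lambda>r. 2 * (cmod (f r))\<^sup>2 + 2 * (cmod (g r))\<^sup>2)"
      using assms by (simp add: L2_def)
    show "(\<lambda>r. (cmod (f r + g r))\<^sup>2) \<in> borel_measurable (lebesgue_on A)"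
      using meas by measurable
    show "AE r in lebesgue_on A. norm ((cmod (f r + g r))\<^sup>2) \<le> norm (2 * (cmod (f r))\<^sup>2 + 2 * (cmod (g r))\<^sup>2)"
      using bound by (intro AE_I2) simp
  qed
  with meas show ?thesis
    by (simp add: L2_def)
qed

lemma L2_mult_left:
  assumes "L2 A f"
  shows "L2 A (\<lambda>r. c * f r)"
proof -
  have "f \<in> borel_measurable (lebesgue_on A)"
    using assms by (simp add: L2_def)
  then have "(\<lambda>r. c * f r) \<in> borel_measurable (lebesgue_on A)"
    by measurable
  with assms show ?thesis
    by (simp add: L2_def norm_mult power_mult_distrib)
qed

lemma L2_sum:
  assumes "finite I" "\<And>i. i \<in> I \<Longrightarrow> L2 A (f i)"
  shows "L2 A (\<lambda>r. \<Sum>i\<in>I. f i r)"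
  using assms
proof (induction I rule: finite_induct)
  case empty
  then show ?case by (simp add: L2_def)
next
  case (insert i I)
  then show ?case by (simp add: L2_add)
qed

lemma L2_diff:
  assumes "L2 A f" "L2 A g"
  shows "L2 A (\<lambda>r. f r - g r)"
  using L2_add[OF assms(1) L2_mult_left[OF assms(2), of "-1"]] by simp

lemma ip_integrable:
  assumes "L2 A f" "L2 A g"
  shows "integrable (lebesgue_on A) (\<lambda>r. cnj (f r) * g r)"
proof (rule Bochner_Integration.integrable_bound)
  show "integrable (lebesgue_on A) (\<lambda>r. (cmod (f r))\<^sup>2 + (cmod (g r))\<^sup>2)"
    using assms by (simp add: L2_def)
  have "f \<in> borel_measurable (lebesgue_on A)" "g \<in> borel_measurable (lebesgue_on A)"
    using assms by (simp_all add: L2_def)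
  then show "(\<lambda>r. cnj (f r) * g r) \<in> borel_measurable (lebesgue_on A)"
    by measurable
  have "cmod (f r) * cmod (g r) \<le> (cmod (f r))\<^sup>2 + (cmod (g r))\<^sup>2" for r
    using zero_le_power2[of "cmod (f r) - cmod (g r)"] mult_nonneg_nonneg[OF norm_ge_zero norm_ge_zero, of "f r" "g r"]
    unfolding power2_diff by linarith
  then show "AE r in lebesgue_on A. norm (cnj (f r) * g r) \<le> norm ((cmod (f r))\<^sup>2 + (cmod (g r))\<^sup>2)"
    by (simp add: norm_mult)
qed

lemma ip_add_right:
  assumes "L2 A f" "L2 A g1" "L2 A g2"
  shows "ip A f (\<lambda>r. g1 r + g2 r) = ip A f g1 + ip A f g2"
  unfolding ip_def using ip_integrable[OF assms(1,2)] ip_integrable[OF assms(1,3)]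
  by (simp add: distrib_left)

lemma ip_diff_right:
  assumes "L2 A f" "L2 A g1" "L2 A g2"
  shows "ip A f (\<lambda>r. g1 r - g2 r) = ip A f g1 - ip A f g2"
  unfolding ip_def using ip_integrable[OF assms(1,2)] ip_integrable[OF assms(1,3)]
  by (simp add: right_diff_distrib)

lemma ip_lincomb_right:
  assumes "finite I" "L2 A f" "\<And>i. i \<in> I \<Longrightarrow> L2 A (g i)"
  shows "ip A f (\<lambda>r. \<Sum>i\<in>I. c i * g i r) = (\<Sum>i\<in>I. c i * ip A f (g i))"
  unfolding ip_def using assms ip_integrable[OF assms(2)]
  by (simp add: sum_distrib_left mult.left_commute)

lemma ip_commute_cnj: "ip A g f = cnj (ip A f g)"
  unfolding ip_def Bochner_Integration.integral_cnj[symmetric] by (simp add: mult.commute)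

lemma ip_self: "ip A f f = of_real (sqnorm A f)"
proof -
  have "cnj (f r) * f r = of_real ((cmod (f r))\<^sup>2)" for r
    by (metis complex_norm_square mult.commute)
  then show ?thesis unfolding ip_def by (simp del: of_real_power)
qed

lemma ip_lincomb_self:
  assumes "finite I" "\<And>i. i \<in> I \<Longrightarrow> L2 A (h i)"
  shows "ip A (\<lambda>r. \<Sum>i\<in>I. x i * h i r) (\<lambda>r. \<Sum>i\<in>I. x i * h i r)
       = (\<Sum>i\<in>I. \<Sum>j\<in>I. cnj (x i) * gram A h i j * x j)"
proof -
  let ?v = "\<lambda>r. \<Sum>i\<in>I. x i * h i r"
  have v: "L2 A ?v"
    using assms by (intro L2_sum L2_mult_left) auto
  have "ip A ?v (h j) = (\<Sum>i\<in>I. cnj (x i) * gram A h i j)" if "j \<in> I" for j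
  proof -
    have "ip A ?v (h j) = cnj (ip A (h j) ?v)"
      by (rule ip_commute_cnj)
    also have "\<dots> = cnj (\<Sum>i\<in>I. x i * ip A (h j) (h i))"
      using ip_lincomb_right[OF assms(1) assms(2)[OF that] assms(2), where c=x] by simp
    also have "\<dots> = (\<Sum>i\<in>I. cnj (x i) * gram A h i j)"
      by (simp add: gram_def ip_commute_cnj[symmetric])
    finally show ?thesis .
  qed
  then have "ip A ?v ?v = (\<Sum>j\<in>I. x j * (\<Sum>i\<in>I. cnj (x i) * gram A h i j))"
    using ip_lincomb_right[OF assms(1) v assms(2)] by simp
  also have "\<dots> = (\<Sum>i\<in>I. \<Sum>j\<in>I. cnj (x i) * gram A h i j * x j)"
    by (subst sum.swap) (simp add: sum_distrib_left mult_ac)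
  finally show ?thesis .
qed

lemma sqnorm_lincomb_pos:
  assumes "\<forall>i<K. L2 A (h i)" "pos_def_mat K (gram A h)" "i < K" "x i \<noteq> 0"
  shows "0 < sqnorm A (\<lambda>r. \<Sum>j<K. x j * h j r)"
proof -
  let ?v = "\<lambda>r. \<Sum>j<K. x j * h j r"
  have "0 < Re (\<Sum>i<K. \<Sum>j<K. cnj (x i) * gram A h i j * x j)"
    using assms(2-4) unfolding pos_def_mat_def by blast
  also have "\<dots> = Re (ip A ?v ?v)"
    using ip_lincomb_self[of "{..<K}" A h x] assms(1) by simp
  also have "\<dots> = sqnorm A ?v"
    by (simp add: ip_self)
  finally show ?thesis .
qed

section \<open>Cauchy--Schwarz in \<open>L\<^sup>2(A) \<oplus> \<ell>\<^sup>2(p)\<close>\<close>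

lemma young_ineq:
  fixes a b \<alpha> :: real
  assumes "0 < \<alpha>"
  shows "a * b \<le> (\<alpha> * a\<^sup>2 + b\<^sup>2 / \<alpha>) / 2"
proof -
  have "0 \<le> (\<alpha> * a - b)\<^sup>2 / \<alpha>"
    using assms by simp
  also have "\<dots> = \<alpha> * a\<^sup>2 + b\<^sup>2 / \<alpha> - 2 * a * b"
    using assms by (simp add: field_simps power2_eq_square)
  finally show ?thesis by simp
qed

lemma cmod_ip_le_young:
  assumes "L2 A f" "L2 A g" "0 < \<alpha>"
  shows "cmod (ip A f g) \<le> (\<alpha> * sqnorm A f + sqnorm A g / \<alpha>) / 2"
proof -
  have "cmod (ip A f g) \<le> integral\<^sup>L (lebesgue_on A) (\<lambda>r. norm (cnj (f r) * g r))"
    unfolding ip_def by (rule integral_norm_bound)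
  also have "\<dots> \<le> integral\<^sup>L (lebesgue_on A) (\<lambda>r. (\<alpha> * (cmod (f r))\<^sup>2 + (cmod (g r))\<^sup>2 / \<alpha>) / 2)"
  proof (rule integral_mono)
    show "integrable (lebesgue_on A) (\<lambda>r. norm (cnj (f r) * g r))"
      using ip_integrable[OF assms(1,2)] by (rule integrable_norm)
    show "integrable (lebesgue_on A) (\<lambda>r. (\<alpha> * (cmod (f r))\<^sup>2 + (cmod (g r))\<^sup>2 / \<alpha>) / 2)"
      using assms by (simp add: L2_def)
    show "norm (cnj (f r) * g r) \<le> (\<alpha> * (cmod (f r))\<^sup>2 + (cmod (g r))\<^sup>2 / \<alpha>) / 2" for r
      using young_ineq[OF assms(3)] by (simp add: norm_mult)
  qed
  also have "\<dots> = (\<alpha> * sqnorm A f + sqnorm A g / \<alpha>) / 2"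
    using assms by (simp add: L2_def)
  finally show ?thesis .
qed

lemma square_le_of_young_bounds:
  fixes t X Y :: real
  assumes "0 \<le> t" "0 < X" "0 < Y" "\<And>\<alpha>. 0 < \<alpha> \<Longrightarrow> t \<le> (\<alpha> * X + Y / \<alpha>) / 2"
  shows "t\<^sup>2 \<le> X * Y"
proof -
  define \<alpha> where "\<alpha> = sqrt Y / sqrt X"
  have "0 < \<alpha>"
    using assms by (simp add: \<alpha>_def)
  then have "t \<le> (\<alpha> * X + Y / \<alpha>) / 2"
    by (rule assms(4))
  moreover have "\<alpha> * X = sqrt X * sqrt Y" "Y / \<alpha> = sqrt X * sqrt Y"
    using assms by (simp_all add: \<alpha>_def field_simps)
  ultimately have "t \<le> sqrt X * sqrt Y"
    by simp
  then have "t\<^sup>2 \<le> (sqrt X * sqrt Y)\<^sup>2"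
    using assms(1) by (simp add: power_mono)
  then show ?thesis
    using assms by (simp add: power_mult_distrib)
qed

lemma cauchy_schwarz_L2_weighted:
  assumes "L2 A w" "L2 A u" "0 < sqnorm A w" "0 < sqnorm A u"
    and "finite S" "\<And>i. i \<in> S \<Longrightarrow> 0 \<le> p i"
  shows "(cmod (ip A w u + (\<Sum>i\<in>S. of_real (p i) * c i * a i)))\<^sup>2
       \<le> (sqnorm A w + (\<Sum>i\<in>S. p i * (cmod (a i))\<^sup>2)) * (sqnorm A u + (\<Sum>i\<in>S. p i * (cmod (c i))\<^sup>2))"
proof (rule square_le_of_young_bounds)
  have "0 \<le> (\<Sum>i\<in>S. p i * (cmod (a i))\<^sup>2)" "0 \<le> (\<Sum>i\<in>S. p i * (cmod (c i))\<^sup>2)"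
    using assms(6) by (auto intro: sum_nonneg)
  then show "0 < sqnorm A w + (\<Sum>i\<in>S. p i * (cmod (a i))\<^sup>2)"
    and "0 < sqnorm A u + (\<Sum>i\<in>S. p i * (cmod (c i))\<^sup>2)"
    using assms(3,4) by linarith+
next
  fix \<alpha> :: real
  assume "0 < \<alpha>"
  have "cmod (ip A w u + (\<Sum>i\<in>S. of_real (p i) * c i * a i))
      \<le> cmod (ip A w u) + (\<Sum>i\<in>S. p i * (cmod (a i) * cmod (c i)))"
    using assms(6)
    by (intro order_trans[OF norm_triangle_ineq] add_left_mono order_trans[OF norm_sum] sum_mono)
       (simp add: norm_mult mult_ac)
  also have "\<dots> \<le> (\<alpha> * sqnorm A w + sqnorm A u / \<alpha>) / 2
      + (\<Sum>i\<in>S. p i * ((\<alpha> * (cmod (a i))\<^sup>2 + (cmod (c i))\<^sup>2 / \<alpha>) / 2))"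
    using assms(6) \<open>0 < \<alpha>\<close>
    by (intro add_mono cmod_ip_le_young[OF assms(1,2)] sum_mono mult_left_mono young_ineq) auto
  also have "\<dots> = (\<alpha> * sqnorm A w + sqnorm A u / \<alpha>) / 2
      + (\<alpha> * (\<Sum>i\<in>S. p i * (cmod (a i))\<^sup>2) + (\<Sum>i\<in>S. p i * (cmod (c i))\<^sup>2) / \<alpha>) / 2"
    by (simp add: sum_distrib_left sum_divide_distrib sum.distrib algebra_simps add_divide_distrib)
  also have "\<dots> = (\<alpha> * (sqnorm A w + (\<Sum>i\<in>S. p i * (cmod (a i))\<^sup>2))
      + (sqnorm A u + (\<Sum>i\<in>S. p i * (cmod (c i))\<^sup>2)) / \<alpha>) / 2"
    by (simp add: algebra_simps add_divide_distrib)
  finally show "cmod (ip A w u + (\<Sum>i\<in>S. of_real (p i) * c i * a i))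
      \<le> (\<alpha> * (sqnorm A w + (\<Sum>i\<in>S. p i * (cmod (a i))\<^sup>2))
         + (sqnorm A u + (\<Sum>i\<in>S. p i * (cmod (c i))\<^sup>2)) / \<alpha>) / 2" .
qed simp

section \<open>Invertibility of \<open>I + D G D\<close>\<close>

definition extend_id_mat :: "nat \<Rightarrow> nat set \<Rightarrow> (nat \<Rightarrow> nat \<Rightarrow> 'a::field) \<Rightarrow> 'a mat" where
  "extend_id_mat n S M = mat n n (\<lambda>(i, j). if i \<in> S \<and> j \<in> S then M i j else if i = j then 1 else 0)"

lemma extend_id_mat_row_sum:
  assumes "S \<subseteq> {..<n}" "i < n"
  shows "(\<Sum>j\<in>{0..<n}. extend_id_mat n S M $$ (i, j) * v j) = (if i \<in> S then (\<Sum>j\<in>S. M i j * v j) else v i)"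
proof (cases "i \<in> S")
  case True
  have "(\<Sum>j\<in>{0..<n}. extend_id_mat n S M $$ (i, j) * v j) = (\<Sum>j\<in>{0..<n}. if j \<in> S then M i j * v j else 0)"
    using assms(2) True by (intro sum.cong) (auto simp: extend_id_mat_def)
  also have "\<dots> = (\<Sum>j\<in>S. M i j * v j)"
    using assms(1) by (simp add: sum.inter_restrict[symmetric] Int_absorb1 atLeast0LessThan)
  finally show ?thesis
    using True by simp
next
  case False
  have "(\<Sum>j\<in>{0..<n}. extend_id_mat n S M $$ (i, j) * v j) = (\<Sum>j\<in>{0..<n}. if i = j then v j else 0)"
    using assms(2) False by (intro sum.cong) (auto simp: extend_id_mat_def)
  then show ?thesis
    using assms(2) False by simp
qed

lemma det_extend_id_mat_nonzero:
  assumes S: "S \<subseteq> {..<n}"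
    and ker: "\<And>x. \<forall>i\<in>S. (\<Sum>j\<in>S. M i j * x j) = 0 \<Longrightarrow> \<forall>j\<in>S. x j = 0"
  shows "det (extend_id_mat n S M) \<noteq> 0"
proof
  let ?A = "extend_id_mat n S M"
  assume "det ?A = 0"
  then obtain v where v: "v \<in> carrier_vec n" "v \<noteq> 0\<^sub>v n" "?A *\<^sub>v v = 0\<^sub>v n"
    using det_0_iff_vec_prod_zero[of ?A n] by (auto simp: extend_id_mat_def)
  have Av: "(\<Sum>j\<in>{0..<n}. ?A $$ (i, j) * vec_index v j) = 0" if "i < n" for i
    using arg_cong[OF v(3), of "\<lambda>w. vec_index w i"] that v(1)
    by (simp add: scalar_prod_def extend_id_mat_def)
  then have "\<forall>i\<in>S. (\<Sum>j\<in>S. M i j * vec_index v j) = 0"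
    using extend_id_mat_row_sum[OF S] S by (metis lessThan_iff subsetD)
  then have "\<forall>j\<in>S. vec_index v j = 0"
    by (rule ker)
  moreover have "vec_index v i = 0" if "i < n" "i \<notin> S" for i
    using Av[of i] extend_id_mat_row_sum[OF S that(1), of M "\<lambda>j. vec_index v j"] that by simp
  ultimately have "v = 0\<^sub>v n"
    using v(1) by (intro eq_vecI) auto
  with v(2) show False ..
qed

lemma ex_right_inverse_on:
  fixes M :: "nat \<Rightarrow> nat \<Rightarrow> 'a::field"
  assumes S: "S \<subseteq> {..<n}"
    and ker: "\<And>x. \<forall>i\<in>S. (\<Sum>j\<in>S. M i j * x j) = 0 \<Longrightarrow> \<forall>j\<in>S. x j = 0"
  shows "\<exists>B. (\<forall>i\<in>S. \<forall>l\<in>S. (\<Sum>j\<in>S. M i j * B j l) = (if i = l then 1 else 0))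
           \<and> (\<forall>i l. i \<notin> S \<or> l \<notin> S \<longrightarrow> B i l = 0)"
proof -
  let ?A = "extend_id_mat n S M"
  have A: "?A \<in> carrier_mat n n"
    by (simp add: extend_id_mat_def)
  obtain Bm where Bm: "Bm \<in> carrier_mat n n" "?A * Bm = 1\<^sub>m n"
    using det_non_zero_imp_unit[OF A det_extend_id_mat_nonzero[OF assms], of "()"]
    unfolding Units_def ring_mat_def by auto
  define B where "B j l = (if j \<in> S \<and> l \<in> S then Bm $$ (j, l) else 0)" for j l
  have "(\<Sum>j\<in>S. M i j * B j l) = (if i = l then 1 else 0)" if "i \<in> S" "l \<in> S" for i l
  proof -
    have "i < n" "l < n"
      using that S by auto
    have "(\<Sum>j\<in>S. M i j * B j l) = (\<Sum>j\<in>S. M i j * Bm $$ (j, l))"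
      using that by (simp add: B_def)
    also have "\<dots> = (\<Sum>j\<in>{0..<n}. ?A $$ (i, j) * Bm $$ (j, l))"
      using extend_id_mat_row_sum[OF S \<open>i < n\<close>, of M "\<lambda>j. Bm $$ (j, l)"] that by simp
    also have "\<dots> = (?A * Bm) $$ (i, l)"
      using \<open>i < n\<close> \<open>l < n\<close> A Bm(1) by (simp add: scalar_prod_def)
    finally show ?thesis
      using \<open>i < n\<close> \<open>l < n\<close> Bm(2) by simp
  qed
  then show ?thesis
    by (intro exI[of _ B]) (simp add: B_def)
qed

lemma mat_inv_on_right_inverse:
  fixes M :: "nat \<Rightarrow> nat \<Rightarrow> complex"
  assumes S: "S \<subseteq> {..<n}"
    and ker: "\<And>x. \<forall>i\<in>S. (\<Sum>j\<in>S. M i j * x j) = 0 \<Longrightarrow> \<forall>j\<in>S. x j = 0"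
  shows "\<forall>i\<in>S. \<forall>l\<in>S. (\<Sum>j\<in>S. M i j * mat_inv_on S M j l) = (if i = l then 1 else 0)"
proof -
  let ?inv = "\<lambda>B. (\<forall>i\<in>S. \<forall>l\<in>S. (\<Sum>j\<in>S. M i j * B j l) = (if i = l then 1 else 0))
                 \<and> (\<forall>i l. i \<notin> S \<or> l \<notin> S \<longrightarrow> B i l = 0)"
  obtain B where B: "?inv B"
    using ex_right_inverse_on[OF assms] by blast
  have "finite S"
    using S finite_subset by blast
  have uniq: "B' = B" if B': "?inv B'" for B'
  proof (intro ext)
    fix j l
    show "B' j l = B j l"
    proof (cases "j \<in> S \<and> l \<in> S")
      case True
      have "\<forall>i\<in>S. (\<Sum>j\<in>S. M i j * (B' j l - B j l)) = 0"
        using B B' True \<open>finite S\<close> by (simp add: right_diff_distrib sum_subtractf)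
      then show ?thesis
        using ker True by fastforce
    next
      case False
      then show ?thesis
        using B B' by auto
    qed
  qed
  have "?inv (mat_inv_on S M)"
    unfolding mat_inv_on_def by (rule theI[where P="?inv", OF B uniq])
  then show ?thesis
    by blast
qed

definition I_plus_DGD :: "(nat \<Rightarrow> real) \<Rightarrow> (nat \<Rightarrow> nat \<Rightarrow> complex) \<Rightarrow> nat \<Rightarrow> nat \<Rightarrow> complex" where
  "I_plus_DGD d G i j = (if i = j then 1 else 0) + of_real (d i) * G i j * of_real (d j)"

lemma I_plus_DGD_mult_vec:
  assumes "finite S" "i \<in> S"
  shows "(\<Sum>j\<in>S. I_plus_DGD d G i j * x j) = x i + of_real (d i) * (\<Sum>j\<in>S. G i j * (of_real (d j) * x j))"
proof -
  have "I_plus_DGD d G i j * x j = (if i = j then x j else 0) + of_real (d i) * (G i j * (of_real (d j) * x j))"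
    for j
    by (simp add: I_plus_DGD_def algebra_simps)
  then have "(\<Sum>j\<in>S. I_plus_DGD d G i j * x j)
      = (\<Sum>j\<in>S. if i = j then x j else 0) + (\<Sum>j\<in>S. of_real (d i) * (G i j * (of_real (d j) * x j)))"
    by (simp add: sum.distrib)
  then show ?thesis
    using assms by (simp add: sum_distrib_left)
qed

lemma pos_def_mat_form_nonneg_on:
  assumes "pos_def_mat K G" "S \<subseteq> {..<K}"
  shows "0 \<le> Re (\<Sum>i\<in>S. \<Sum>j\<in>S. cnj (y i) * G i j * y j)"
proof -
  define y' where "y' i = (if i \<in> S then y i else 0)" for i
  have inner: "(\<Sum>j<K. cnj (y' i) * G i j * y' j) = (\<Sum>j\<in>S. cnj (y' i) * G i j * y' j)" for i
    using assms(2) by (intro sum.mono_neutral_right) (auto simp: y'_def)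
  have "(\<Sum>i<K. \<Sum>j<K. cnj (y' i) * G i j * y' j) = (\<Sum>i\<in>S. \<Sum>j\<in>S. cnj (y' i) * G i j * y' j)"
    unfolding inner using assms(2) by (intro sum.mono_neutral_right) (auto simp: y'_def)
  also have "\<dots> = (\<Sum>i\<in>S. \<Sum>j\<in>S. cnj (y i) * G i j * y j)"
    by (simp add: y'_def)
  finally have form: "(\<Sum>i<K. \<Sum>j<K. cnj (y' i) * G i j * y' j) = (\<Sum>i\<in>S. \<Sum>j\<in>S. cnj (y i) * G i j * y j)" .
  show ?thesis
  proof (cases "\<exists>i<K. y' i \<noteq> 0")
    case True
    then have "0 < Re (\<Sum>i<K. \<Sum>j<K. cnj (y' i) * G i j * y' j)"
      using assms(1) unfolding pos_def_mat_def by blast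
    then show ?thesis
      using form by simp
  next
    case False
    then show ?thesis
      using form by simp
  qed
qed

lemma I_plus_DGD_kernel:
  assumes "pos_def_mat K G" "S \<subseteq> {..<K}"
    and Mx: "\<forall>i\<in>S. (\<Sum>j\<in>S. I_plus_DGD d G i j * x j) = 0"
  shows "\<forall>j\<in>S. x j = 0"
proof -
  have "finite S"
    using assms(2) finite_subset by blast
  define y where "y j = of_real (d j) * x j" for j
  have "0 = (\<Sum>i\<in>S. cnj (x i) * (\<Sum>j\<in>S. I_plus_DGD d G i j * x j))"
    using Mx by simp
  also have "\<dots> = (\<Sum>i\<in>S. cnj (x i) * x i + (\<Sum>j\<in>S. cnj (y i) * G i j * y j))"
  proof (rule sum.cong)
    fix i
    assume "i \<in> S"
    then show "cnj (x i) * (\<Sum>j\<in>S. I_plus_DGD d G i j * x j)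
        = cnj (x i) * x i + (\<Sum>j\<in>S. cnj (y i) * G i j * y j)"
      unfolding I_plus_DGD_mult_vec[OF \<open>finite S\<close> \<open>i \<in> S\<close>]
      by (simp add: y_def distrib_left sum_distrib_left mult_ac)
  qed simp
  also have "\<dots> = (\<Sum>i\<in>S. cnj (x i) * x i) + (\<Sum>i\<in>S. \<Sum>j\<in>S. cnj (y i) * G i j * y j)"
    by (rule sum.distrib)
  also have "(\<Sum>i\<in>S. cnj (x i) * x i) = of_real (\<Sum>i\<in>S. (cmod (x i))\<^sup>2)"
    unfolding of_real_sum by (simp add: complex_norm_square mult.commute del: of_real_power)
  finally have "Re 0 = Re (of_real (\<Sum>i\<in>S. (cmod (x i))\<^sup>2) + (\<Sum>i\<in>S. \<Sum>j\<in>S. cnj (y i) * G i j * y j))"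
    by (rule arg_cong)
  then have "(\<Sum>i\<in>S. (cmod (x i))\<^sup>2) = - Re (\<Sum>i\<in>S. \<Sum>j\<in>S. cnj (y i) * G i j * y j)"
    by simp
  also have "\<dots> \<le> 0"
    using pos_def_mat_form_nonneg_on[OF assms(1,2)] by simp
  finally have "(\<Sum>i\<in>S. (cmod (x i))\<^sup>2) = 0"
    by (simp add: order_antisym sum_nonneg)
  then have "\<forall>i\<in>S. (cmod (x i))\<^sup>2 = 0"
    using \<open>finite S\<close> by (simp add: sum_nonneg_eq_0_iff)
  then show ?thesis
    by simp
qed

lemma regularized_normal_equation:
  fixes G B :: "nat \<Rightarrow> nat \<Rightarrow> complex"
  assumes "finite S" "i \<in> S"
    and inv: "\<forall>i\<in>S. \<forall>l\<in>S. (\<Sum>j\<in>S. I_plus_DGD d G i j * B j l) = (if i = l then 1 else 0)"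
    and \<beta>: "\<And>j. \<beta> j = of_real (d j) * (\<Sum>l\<in>S. B j l * of_real (d l) * r l)"
  shows "\<beta> i = of_real ((d i)\<^sup>2) * (r i - (\<Sum>j\<in>S. G i j * \<beta> j))"
proof -
  define z where "z j = (\<Sum>l\<in>S. B j l * of_real (d l) * r l)" for j
  have "(\<Sum>j\<in>S. I_plus_DGD d G i j * z j)
      = (\<Sum>j\<in>S. \<Sum>l\<in>S. I_plus_DGD d G i j * B j l * (of_real (d l) * r l))"
    by (simp add: z_def sum_distrib_left mult.assoc)
  also have "\<dots> = (\<Sum>l\<in>S. \<Sum>j\<in>S. I_plus_DGD d G i j * B j l * (of_real (d l) * r l))"
    by (rule sum.swap)
  also have "\<dots> = (\<Sum>l\<in>S. if i = l then of_real (d l) * r l else 0)"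
    using inv \<open>i \<in> S\<close> by (intro sum.cong) (simp_all flip: sum_distrib_right)
  also have "\<dots> = of_real (d i) * r i"
    using assms(1,2) by simp
  finally have "z i + of_real (d i) * (\<Sum>j\<in>S. G i j * \<beta> j) = of_real (d i) * r i"
    using I_plus_DGD_mult_vec[OF assms(1,2), of d G z] by (simp add: \<beta> z_def)
  then have "z i = of_real (d i) * (r i - (\<Sum>j\<in>S. G i j * \<beta> j))"
    by (simp add: algebra_simps)
  then show ?thesis
    by (simp add: \<beta> z_def power2_eq_square)
qed

section \<open>The MMSE beamformer\<close>

lemma Cbar_mat_eq_mat_inv_on:
  "Cbar_mat A K P \<sigma>2 h k = mat_inv_on ({0..<K} - {k}) (I_plus_DGD (\<lambda>i. sqrt (P i / \<sigma>2)) (gram A h))"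
  by (simp add: Cbar_mat_def C_mat_def I_plus_DGD_def [abs_def])

text \<open>Entry \<open>j\<close> of \<open>P\<^sub>k\<^sup>1\<^sup>/\<^sup>2 Cbar\<^sub>k P\<^sub>k\<^sup>1\<^sup>/\<^sup>2 r\<^sub>k\<^sub>,\<^sub>k = (P\<^sub>k\<^sup>-\<^sup>1 + R\<^sub>k)\<^sup>-\<^sup>1 r\<^sub>k\<^sub>,\<^sub>k\<close>,
  the weight of \<open>h\<^sub>j\<close> in the MMSE beamformer.\<close>

definition mmse_coeff :: "(real^3) set \<Rightarrow> nat \<Rightarrow> (nat \<Rightarrow> real) \<Rightarrow> real \<Rightarrow> (nat \<Rightarrow> real^3 \<Rightarrow> complex)
                          \<Rightarrow> nat \<Rightarrow> nat \<Rightarrow> complex" where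
  "mmse_coeff A K P \<sigma>2 h k j = of_real (sqrt (P j / \<sigma>2)) *
     (\<Sum>l\<in>{0..<K} - {k}. Cbar_mat A K P \<sigma>2 h k j l * of_real (sqrt (P l / \<sigma>2)) * gram A h l k)"

lemma w_mmse_eq_lincomb:
  assumes "0 < \<sigma>2"
  shows "w_mmse A K P \<sigma>2 h k = (\<lambda>r. h k r - (\<Sum>j\<in>{0..<K} - {k}. mmse_coeff A K P \<sigma>2 h k j * h j r))"
proof -
  have sqrt_split: "sqrt (a * b) / \<sigma>2 = sqrt (a / \<sigma>2) * sqrt (b / \<sigma>2)" for a b
    using assms by (simp add: real_sqrt_mult real_sqrt_divide)
  show ?thesis
    unfolding w_mmse_def [abs_def] mmse_coeff_def
    by (simp add: sqrt_split sum_distrib_left sum_distrib_right mult_ac)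
qed

lemma L2_w_mmse:
  assumes "0 < \<sigma>2" "\<forall>i<K. L2 A (h i)" "k < K"
  shows "L2 A (w_mmse A K P \<sigma>2 h k)"
proof -
  have "L2 A (\<lambda>r. h k r - (\<Sum>j\<in>{0..<K} - {k}. mmse_coeff A K P \<sigma>2 h k j * h j r))"
    using assms by (intro L2_diff L2_sum L2_mult_left) auto
  then show ?thesis
    by (simp add: w_mmse_eq_lincomb[OF assms(1)])
qed

lemma sqnorm_w_mmse_pos:
  assumes "0 < \<sigma>2" "\<forall>i<K. L2 A (h i)" "pos_def_mat K (gram A h)" "k < K"
  shows "0 < sqnorm A (w_mmse A K P \<sigma>2 h k)"
proof -
  define x where "x j = (if j = k then 1 else - mmse_coeff A K P \<sigma>2 h k j)" for j
  have "(\<Sum>j<K. x j * h j r) = h k r + (\<Sum>j\<in>{0..<K} - {k}. - (mmse_coeff A K P \<sigma>2 h k j * h j r))"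
    for r
    using assms(4) by (subst sum.remove[of _ k]) (auto simp: x_def atLeast0LessThan intro!: sum.cong)
  then have "w_mmse A K P \<sigma>2 h k r = (\<Sum>j<K. x j * h j r)" for r
    by (simp add: w_mmse_eq_lincomb[OF assms(1)] sum_negf)
  moreover have "0 < sqnorm A (\<lambda>r. \<Sum>j<K. x j * h j r)"
    using assms(2-4) by (rule sqnorm_lincomb_pos) (simp add: x_def)
  ultimately show ?thesis
    by simp
qed

lemma mmse_coeff_normal_equation:
  assumes "0 < \<sigma>2" "\<forall>i<K. 0 \<le> P i" "pos_def_mat K (gram A h)" "i \<in> {0..<K} - {k}"
  shows "mmse_coeff A K P \<sigma>2 h k i
       = of_real (P i / \<sigma>2) * (gram A h i k - (\<Sum>j\<in>{0..<K} - {k}. gram A h i j * mmse_coeff A K P \<sigma>2 h k j))"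
proof -
  let ?S = "{0..<K} - {k}" and ?d = "\<lambda>i. sqrt (P i / \<sigma>2)"
  have S: "?S \<subseteq> {..<K}"
    by auto
  have "\<forall>i\<in>?S. \<forall>l\<in>?S. (\<Sum>j\<in>?S. I_plus_DGD ?d (gram A h) i j * Cbar_mat A K P \<sigma>2 h k j l)
      = (if i = l then 1 else 0)"
    unfolding Cbar_mat_eq_mat_inv_on
    using S I_plus_DGD_kernel[OF assms(3) S] by (rule mat_inv_on_right_inverse)
  then have "mmse_coeff A K P \<sigma>2 h k i
      = of_real ((?d i)\<^sup>2) * (gram A h i k - (\<Sum>j\<in>?S. gram A h i j * mmse_coeff A K P \<sigma>2 h k j))"
    using assms(4) by (intro regularized_normal_equation[OF _ _ _ mmse_coeff_def]) auto
  moreover have "(?d i)\<^sup>2 = P i / \<sigma>2"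
    using assms by simp
  ultimately show ?thesis
    by simp
qed

lemma w_mmse_decomposition:
  assumes "0 < \<sigma>2" "\<forall>i<K. 0 \<le> P i" "\<forall>i<K. L2 A (h i)" "pos_def_mat K (gram A h)" "k < K"
  shows "h k = (\<lambda>r. w_mmse A K P \<sigma>2 h k r
              + (\<Sum>i\<in>{0..<K} - {k}. of_real (P i / \<sigma>2) * ip A (h i) (w_mmse A K P \<sigma>2 h k) * h i r))"
proof -
  let ?S = "{0..<K} - {k}" and ?u = "w_mmse A K P \<sigma>2 h k" and ?\<beta> = "mmse_coeff A K P \<sigma>2 h k"
  have h: "L2 A (h i)" if "i \<in> ?S \<or> i = k" for i
    using assms(3,5) that by auto
  have u: "?u = (\<lambda>r. h k r - (\<Sum>j\<in>?S. ?\<beta> j * h j r))"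
    by (rule w_mmse_eq_lincomb[OF assms(1)])
  have "of_real (P i / \<sigma>2) * ip A (h i) ?u = ?\<beta> i" if "i \<in> ?S" for i
  proof -
    have "ip A (h i) ?u = ip A (h i) (h k) - ip A (h i) (\<lambda>r. \<Sum>j\<in>?S. ?\<beta> j * h j r)"
      unfolding u using h that by (intro ip_diff_right L2_sum L2_mult_left) auto
    also have "\<dots> = gram A h i k - (\<Sum>j\<in>?S. ?\<beta> j * gram A h i j)"
      using ip_lincomb_right[of ?S A "h i" h ?\<beta>] h that by (simp add: gram_def)
    finally have "ip A (h i) ?u = gram A h i k - (\<Sum>j\<in>?S. ?\<beta> j * gram A h i j)" .
    then show ?thesis
      using mmse_coeff_normal_equation[OF assms(1,2,4) that] by (simp add: mult.commute)
  qed
  then show ?thesis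
    by (simp add: u)
qed

section \<open>Optimality of the MMSE beamformer\<close>

lemma sinr_nonneg:
  assumes "0 < \<sigma>2" "\<forall>i<K. 0 \<le> P i" "k < K"
  shows "0 \<le> sinr A K P \<sigma>2 h k w"
  unfolding sinr_def using assms
  by (intro divide_nonneg_nonneg mult_nonneg_nonneg add_nonneg_nonneg sum_nonneg sqnorm_nonneg) auto

lemma sinr_le_of_decomposition:
  assumes "0 < \<sigma>2" "\<forall>i<K. 0 \<le> P i" "\<forall>i<K. L2 A (h i)" "k < K"
    and u: "L2 A u" "0 < sqnorm A u"
    and decomp: "h k = (\<lambda>r. u r + (\<Sum>i\<in>{0..<K} - {k}. of_real (P i / \<sigma>2) * ip A (h i) u * h i r))"
    and w: "L2 A w" "sqnorm A w \<noteq> 0"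
  shows "sinr A K P \<sigma>2 h k w \<le> sinr A K P \<sigma>2 h k u"
proof -
  define S where "S = {0..<K} - {k}"
  define p where "p i = P i / \<sigma>2" for i
  define c where "c i = ip A (h i) u" for i
  have S: "finite S" "\<And>i. i \<in> S \<Longrightarrow> L2 A (h i)" "\<And>i. i \<in> S \<Longrightarrow> 0 \<le> p i"
    using assms(1-3) by (auto simp: S_def p_def)
  have hk: "h k = (\<lambda>r. u r + (\<Sum>i\<in>S. (of_real (p i) * c i) * h i r))"
    unfolding S_def p_def c_def by (rule decomp)
  have ip_hk: "ip A v (h k) = ip A v u + (\<Sum>i\<in>S. of_real (p i) * c i * ip A v (h i))" if v: "L2 A v" for v
  proof -
    have "ip A v (h k) = ip A v (\<lambda>r. u r + (\<Sum>i\<in>S. (of_real (p i) * c i) * h i r))"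
      by (subst hk) (rule refl)
    also have "\<dots> = ip A v u + ip A v (\<lambda>r. \<Sum>i\<in>S. (of_real (p i) * c i) * h i r)"
      using S u(1) v by (intro ip_add_right L2_sum L2_mult_left) auto
    finally show ?thesis
      using S v by (simp add: ip_lincomb_right)
  qed
  define Y where "Y = sqnorm A u + (\<Sum>i\<in>S. p i * (cmod (c i))\<^sup>2)"
  have "0 \<le> (\<Sum>i\<in>S. p i * (cmod (c i))\<^sup>2)"
    using S by (simp add: sum_nonneg)
  then have "0 < Y"
    using u(2) by (simp add: Y_def)
  have ip_u_hi: "ip A u (h i) = cnj (c i)" if "i \<in> S" for i
    by (simp add: c_def ip_commute_cnj[of A u])
  have "ip A u (h k) = ip A u u + (\<Sum>i\<in>S. of_real (p i) * (c i * cnj (c i)))"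
    using ip_hk[OF u(1)] ip_u_hi by (simp add: mult.assoc cong: sum.cong)
  also have "\<dots> = of_real Y"
    by (simp add: ip_self Y_def complex_norm_square[symmetric] del: of_real_power)
  finally have "ip A u (h k) = of_real Y" .
  moreover have "(\<Sum>i\<in>{0..<K} - {k}. P i / \<sigma>2 * (cmod (ip A u (h i)))\<^sup>2) + sqnorm A u = Y"
    unfolding S_def[symmetric] p_def[symmetric] using ip_u_hi by (simp add: Y_def cong: sum.cong)
  ultimately have sinr_u: "sinr A K P \<sigma>2 h k u = p k * Y"
    using \<open>0 < Y\<close> by (simp add: sinr_def p_def power2_eq_square)
  define X where "X = sqnorm A w + (\<Sum>i\<in>S. p i * (cmod (ip A w (h i)))\<^sup>2)"
  have "0 < sqnorm A w"
    using w(2) sqnorm_nonneg[of A w] by linarith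
  have cs: "(cmod (ip A w (h k)))\<^sup>2 \<le> X * Y"
    unfolding ip_hk[OF w(1)] X_def Y_def
    using S by (intro cauchy_schwarz_L2_weighted w(1) u \<open>0 < sqnorm A w\<close>) auto
  have "0 < X"
    using \<open>0 < sqnorm A w\<close> S by (simp add: X_def add_pos_nonneg sum_nonneg)
  have "0 \<le> p k"
    using assms(1,2,4) by (simp add: p_def)
  have "sinr A K P \<sigma>2 h k w = p k * (cmod (ip A w (h k)))\<^sup>2 / X"
    by (simp add: sinr_def X_def S_def p_def add.commute)
  also have "\<dots> \<le> p k * (X * Y) / X"
    using cs \<open>0 < X\<close> \<open>0 \<le> p k\<close> by (intro divide_right_mono mult_left_mono) auto
  also have "\<dots> = sinr A K P \<sigma>2 h k u"
    using \<open>0 < X\<close> by (simp add: sinr_u)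
  finally show ?thesis .
qed

theorem theorem3:
  fixes A :: "(real^3) set" and K :: nat and P :: "nat \<Rightarrow> real" and \<sigma>2 :: real
    and h :: "nat \<Rightarrow> real^3 \<Rightarrow> complex" and k :: nat
  assumes "A \<in> sets lebesgue"
    and "K \<ge> 2"
    and "\<forall>i<K. P i > 0"
    and "\<sigma>2 > 0"
    and "\<forall>i<K. L2 A (h i)"
    and "pos_def_mat K (gram A h)"
    and "k < K"
  shows "L2 A (w_mmse A K P \<sigma>2 h k)
       \<and> integral\<^sup>L (lebesgue_on A) (\<lambda>r. (cmod (w_mmse A K P \<sigma>2 h k r))\<^sup>2) \<noteq> 0
       \<and> (\<forall>w. L2 A w \<and> integral\<^sup>L (lebesgue_on A) (\<lambda>r. (cmod (w r))\<^sup>2) \<noteq> 0 \<longrightarrow>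
             sinr A K P \<sigma>2 h k w \<le> sinr A K P \<sigma>2 h k (w_mmse A K P \<sigma>2 h k)
           \<and> rate A K P \<sigma>2 h k w \<le> rate A K P \<sigma>2 h k (w_mmse A K P \<sigma>2 h k))"
proof -
  let ?u = "w_mmse A K P \<sigma>2 h k"
  have P: "\<forall>i<K. 0 \<le> P i"
    using assms(3) by (simp add: less_imp_le)
  have u: "L2 A ?u" "0 < sqnorm A ?u"
    using assms(4-7) by (simp_all add: L2_w_mmse sqnorm_w_mmse_pos)
  have decomp: "h k = (\<lambda>r. ?u r + (\<Sum>i\<in>{0..<K} - {k}. of_real (P i / \<sigma>2) * ip A (h i) ?u * h i r))"
    using assms(4-7) P by (intro w_mmse_decomposition)
  have "sinr A K P \<sigma>2 h k w \<le> sinr A K P \<sigma>2 h k ?u \<and> rate A K P \<sigma>2 h k w \<le> rate A K P \<sigma>2 h k ?u"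
    if "L2 A w" "sqnorm A w \<noteq> 0" for w
  proof -
    have "sinr A K P \<sigma>2 h k w \<le> sinr A K P \<sigma>2 h k ?u"
      using assms(4) P assms(5,7) u decomp that by (rule sinr_le_of_decomposition)
    moreover have "0 \<le> sinr A K P \<sigma>2 h k w"
      using assms(4) P assms(7) by (rule sinr_nonneg)
    ultimately show ?thesis
      unfolding rate_def by (simp add: log_mono)
  qed
  with u show ?thesis
    by auto
qed

end
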